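(* Let $\lambda_{\max}\ge 1$ and let $F:[0,\lambda_{\max}]\to\mathbb{R}_+$ be continuously differentiable with $F(0)=0$. Let $$F^\star=\sup\Big\{\mathbb{E}_\alpha[F(X)] : \alpha \text{ a probability measure on }[0,\lambda_{\max}],\ X\sim\alpha,\ \mathbb{E}_\alpha[X]\le 1\Big\}.$$ Then for every stable control policy $\lambda:\mathbb{Z}_+\to[0,\lambda_{\max}]$, with stationary queue length $\bar q\sim\pi$, we have $\mathbb{E}_\pi[F(\lambda(\bar q))]\le F^\star$.
   Context: A control policy is a function $\lambda:\mathbb{Z}_+\to[0,\lambda_{\max}]$. It defines a continuous-time birth–death Markov chain (the queue length of a single-server queue with service rate $1$) on $\mathbb{Z}_+$ with transition rate $\lambda(q)$ from $q$ to $q+1$ and rate $1$ from $q$ to $q-1$ for $q\ge 1$. Let $\mathcal S$ be the set of states reachable from $0$ (i.e. $\mathcal S=\{0,1,\dots,q_0\}$ with $q_0$ the first $q\ge 1$ with $\lambda(q)=0$, or $\mathcal S=\mathbb{Z}_+$ if there is none). The policy is called stable if $\sum_{i\in\mathcal S}\prod_{q=0}^{i}\lambda(q)<\infty$, i.e. the chain restricted to $\mathcal S$ is positive recurrent; then $\pi$ denotes its unique stationary distribution on $\mathcal S$ and $\bar q$ a random variable with law $\pi$. *)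

theory Defs
  imports "HOL-Probability.Probability"
begin

definition is_policy :: "real \<Rightarrow> (nat \<Rightarrow> real) \<Rightarrow> bool" where
  "is_policy lmax lam \<longleftrightarrow> (\<forall>q. 0 \<le> lam q \<and> lam q \<le> lmax)"

definition reach_states :: "(nat \<Rightarrow> real) \<Rightarrow> nat set" where
  "reach_states lam = {i. \<forall>q<i. lam q > 0}"

definition stable_policy :: "(nat \<Rightarrow> real) \<Rightarrow> bool" where
  "stable_policy lam \<longleftrightarrow>
     summable (\<lambda>i. if i \<in> reach_states lam then (\<Prod>q\<in>{..i}. lam q) else 0)"

text \<open>pi is a stationary distribution of the birth-death chain (up rate lam q, down rate 1)
  restricted to the reachable states: a probability distribution supported on the reachable
  states satisfying the global balance equations there.\<close>
definition stationary_dist :: "(nat \<Rightarrow> real) \<Rightarrow> (nat \<Rightarrow> real) \<Rightarrow> bool" where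
  "stationary_dist lam p \<longleftrightarrow>
     (\<forall>i. 0 \<le> p i) \<and> p sums 1 \<and> (\<forall>i. i \<notin> reach_states lam \<longrightarrow> p i = 0) \<and>
     (\<forall>j \<in> reach_states lam.
        p j * (lam j + (if j \<ge> 1 then 1 else 0)) =
        (if j \<ge> 1 then p (j - 1) * lam (j - 1) else 0) + p (j + 1))"

definition Fstar :: "real \<Rightarrow> (real \<Rightarrow> real) \<Rightarrow> real" where
  "Fstar lmax F = Sup {(\<integral>x. F x \<partial>\<alpha>) | \<alpha>.
       prob_space \<alpha> \<and> sets \<alpha> = sets (restrict_space borel {0..lmax}) \<and>
       (\<integral>x. x \<partial>\<alpha>) \<le> 1}"

end

theory Submission
  imports Defs
begin

text \<open>The law of the arrival rate \<open>\<lambda>(q)\<close> at the stationary queue length is itself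
  feasible in the definition of \<open>F\<^sup>\<star>\<close>: the balance equations of the birth-death chain
  reduce to the cut equations \<open>\<pi>(i) \<lambda>(i) = \<pi>(i+1)\<close>, so the mean arrival rate is
  \<open>1 - \<pi>(0) \<le> 1\<close>, and the \<open>F\<close>-mean of that law is the left-hand side.\<close>

lemma stationary_dist_cut_balance:
  assumes "stationary_dist lam p"
  shows "p i * lam i = p (Suc i)"
proof (induction i)
  case 0
  have "0 \<in> reach_states lam" by (simp add: reach_states_def)
  with assms have "p 0 * (lam 0 + 0) = 0 + p 1" unfolding stationary_dist_def by force
  then show ?case by simp
next
  case (Suc n)
  show ?case
  proof (cases "Suc n \<in> reach_states lam")
    case True
    with assms have "p (Suc n) * (lam (Suc n) + 1) = p n * lam n + p (Suc (Suc n))"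
      by (auto simp add: stationary_dist_def)
    with Suc show ?thesis by (simp add: algebra_simps)
  next
    case False
    then have "Suc (Suc n) \<notin> reach_states lam"
      unfolding reach_states_def using less_SucI by blast
    with False assms show ?thesis by (simp add: stationary_dist_def)
  qed
qed

lemma stationary_dist_mean_rate:
  assumes "stationary_dist lam p"
  shows "(\<lambda>i. p i * lam i) sums (1 - p 0)"
proof -
  have "p sums 1" using assms by (simp add: stationary_dist_def)
  then show ?thesis by (simp add: stationary_dist_cut_balance[OF assms] sums_Suc_iff)
qed

lemma prob_space_density_count_space_nat:
  fixes p :: "nat \<Rightarrow> real"
  assumes "\<And>i. 0 \<le> p i" and "p sums 1"
  shows "prob_space (density (count_space UNIV) (\<lambda>i. ennreal (p i)))"
proof (rule prob_spaceI)
  have "(\<Sum>i. ennreal (p i)) = ennreal 1"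
    using assms by (metis sums_unique suminf_ennreal2 sums_summable)
  then show "emeasure (density (count_space UNIV) (\<lambda>i. ennreal (p i)))
      (space (density (count_space UNIV) (\<lambda>i. ennreal (p i)))) = 1"
    by (simp add: emeasure_density nn_integral_count_space_nat)
qed

lemma integral_density_count_space_nat_bounded:
  fixes p g :: "nat \<Rightarrow> real"
  assumes p_nonneg: "\<And>i. 0 \<le> p i" and "summable p" and g_bounded: "\<And>i. \<bar>g i\<bar> \<le> C"
  shows "integral\<^sup>L (density (count_space UNIV) (\<lambda>i. ennreal (p i))) g = (\<Sum>i. p i * g i)"
proof -
  have "summable (\<lambda>i. C * p i)" using \<open>summable p\<close> by (rule summable_mult)
  then have "summable (\<lambda>i. norm (p i * g i))"
    by (rule summable_comparison_test'[where N = 0])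
       (auto simp: abs_mult p_nonneg intro!: mult_left_mono[OF g_bounded, of "p _", simplified mult.commute])
  then have "integrable (count_space UNIV) (\<lambda>i. p i * g i)"
    by (simp add: integrable_count_space_nat_iff)
  then have "integral\<^sup>L (count_space UNIV) (\<lambda>i. p i * g i) = (\<Sum>i. p i * g i)"
    by (simp add: sums_integral_count_space_nat sums_unique)
  then show ?thesis by (subst integral_density) (auto simp: p_nonneg)
qed

lemma integral_le_Fstar:
  assumes F_bounded: "\<And>x. x \<in> {0..lmax} \<Longrightarrow> F x \<le> B"
    and "prob_space \<alpha>" and "sets \<alpha> = sets (restrict_space borel {0..lmax})"
    and "(\<integral>x. x \<partial>\<alpha>) \<le> 1"
  shows "(\<integral>x. F x \<partial>\<alpha>) \<le> Fstar lmax F"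
proof -
  let ?S = "{(\<integral>x. F x \<partial>\<alpha>) | \<alpha>.
       prob_space \<alpha> \<and> sets \<alpha> = sets (restrict_space borel {0..lmax}) \<and> (\<integral>x. x \<partial>\<alpha>) \<le> 1}"
  have "bdd_above ?S"
  proof (rule bdd_aboveI[where M = "max B 0"], safe)
    fix \<beta> :: "real measure"
    assume "prob_space \<beta>" and "sets \<beta> = sets (restrict_space borel {0..lmax})"
    then interpret \<beta>: prob_space \<beta> by simp
    have "space \<beta> = {0..lmax}"
      using sets_eq_imp_space_eq[OF \<open>sets \<beta> = _\<close>] by (simp add: space_restrict_space)
    show "integral\<^sup>L \<beta> F \<le> max B 0"
    proof (cases "integrable \<beta> F")
      case True
      have "integral\<^sup>L \<beta> F \<le> integral\<^sup>L \<beta> (\<lambda>_. max B 0)"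
        using F_bounded \<open>space \<beta> = _\<close>
        by (intro integral_mono[OF True]) (auto intro: le_max_iff_disj[THEN iffD2])
      then show ?thesis by (simp add: \<beta>.prob_space)
    qed (simp add: not_integrable_integral_eq)
  qed
  moreover have "(\<integral>x. F x \<partial>\<alpha>) \<in> ?S" using assms(2-4) by blast
  ultimately show ?thesis unfolding Fstar_def by (rule cSup_upper[rotated])
qed

lemma integral_distr_density_count_space_nat:
  fixes p :: "nat \<Rightarrow> real" and f :: "nat \<Rightarrow> real" and g :: "real \<Rightarrow> real"
  assumes "\<And>i. 0 \<le> p i" and "summable p"
    and "\<And>i. f i \<in> S" and "g \<in> borel_measurable (restrict_space borel S)"
    and "\<And>i. \<bar>g (f i)\<bar> \<le> C"
  shows "(\<integral>x. g x \<partial>distr (density (count_space UNIV) (\<lambda>i. ennreal (p i)))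
      (restrict_space borel S) f) = (\<Sum>i. p i * g (f i))"
  using assms
  by (subst integral_distr)
     (auto simp: space_restrict_space intro: integral_density_count_space_nat_bounded)

theorem proposition4p1:
  fixes lmax :: real and F :: "real \<Rightarrow> real" and lam :: "nat \<Rightarrow> real" and p :: "nat \<Rightarrow> real"
  assumes "lmax \<ge> 1"
    and "\<exists>F'. continuous_on {0..lmax} F' \<and>
           (\<forall>x\<in>{0..lmax}. (F has_real_derivative F' x) (at x within {0..lmax}))"
    and "\<forall>x\<in>{0..lmax}. F x \<ge> 0"
    and "F 0 = 0"
    and "is_policy lmax lam"
    and "stable_policy lam"
    and "stationary_dist lam p"
  shows "(\<Sum>i. p i * F (lam i)) \<le> Fstar lmax F"
proof -
  have F_cont: "continuous_on {0..lmax} F"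
    using assms(2) continuous_on_eq_continuous_within DERIV_continuous by blast
  then obtain B where B: "\<And>x. x \<in> {0..lmax} \<Longrightarrow> \<bar>F x\<bar> \<le> B"
    using compact_continuous_image[OF F_cont] compact_imp_bounded
    by (metis abs_le_iff bounded_real compact_Icc image_eqI)
  have p_nonneg: "\<And>i. 0 \<le> p i" and "p sums 1"
    using assms(7) by (auto simp: stationary_dist_def)
  have lam_range: "\<And>i. lam i \<in> {0..lmax}"
    using assms(5) by (auto simp: is_policy_def)
  define \<alpha> where "\<alpha> = distr (density (count_space UNIV) (\<lambda>i. ennreal (p i)))
    (restrict_space borel {0..lmax}) lam"
  have "prob_space \<alpha>"
    unfolding \<alpha>_def using prob_space_density_count_space_nat[OF p_nonneg \<open>p sums 1\<close>]
    by (rule prob_space.prob_space_distr) (use lam_range in \<open>auto simp: space_restrict_space\<close>)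
  moreover have "sets \<alpha> = sets (restrict_space borel {0..lmax})" by (simp add: \<alpha>_def)
  moreover have "(\<integral>x. x \<partial>\<alpha>) = (\<Sum>i. p i * lam i)"
    unfolding \<alpha>_def using p_nonneg \<open>p sums 1\<close> lam_range
    by (intro integral_distr_density_count_space_nat[where C = lmax])
       (auto intro: sums_summable borel_measurable_continuous_on_restrict)
  then have "(\<integral>x. x \<partial>\<alpha>) \<le> 1"
    using stationary_dist_mean_rate[OF assms(7)] p_nonneg[of 0] sums_unique by fastforce
  moreover have "(\<integral>x. F x \<partial>\<alpha>) = (\<Sum>i. p i * F (lam i))"
    unfolding \<alpha>_def using p_nonneg \<open>p sums 1\<close> lam_range B
    by (intro integral_distr_density_count_space_nat[where C = B])
       (auto intro: sums_summable borel_measurable_continuous_on_restrict[OF F_cont])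
  ultimately show ?thesis
    using integral_le_Fstar[of lmax F B \<alpha>] B by (simp add: abs_le_iff)
qed

end
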